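(* Let $\Sigma=(\mathbf{x},\mathbf{F})$ be an LP seed of rank $n\ge2$ satisfying Condition 1.2. Then, as $R$-modules, $$R[x_2,x'_2,\dots,x_n,x'_n]=\ker(\varphi)\oplus R^{st}[x_2,x'_2,\dots,x_n,x'_n],$$ and the restriction of $\varphi$ to $R^{st}[x_2,x'_2,\dots,x_n,x'_n]$ is injective.
   Context: $R$ is a unique factorization domain containing $\mathbb{Z}$ and $\mathcal{F}$ is the field of rational functions in $n$ variables over $\mathrm{Frac}(R)$. An LP seed of rank $n$ is a pair $(\mathbf{x},\mathbf{F})$ where $\mathbf{x}=\{x_1,\dots,x_n\}$ is a transcendence basis of $\mathcal{F}$ over $\mathrm{Frac}(R)$ and $\mathbf{F}=\{F_1,\dots,F_n\}$ are irreducible polynomials in $R[x_1,\dots,x_n]$ with $x_j\nmid F_i$ for all $i,j$ and $F_i$ not involving $x_i$. The exchange Laurent polynomial is $\hat F_j=F_j/\prod_{k\neq j}x_k^{a_k}$, with $a_k\in\mathbb{Z}_{\ge0}$ maximal such that $F_k^{a_k}$ divides $F_j|_{x_k\leftarrow F_k/x'_k}$ in $R[x_1,\dots,x_{k-1},(x'_k)^{-1},x_{k+1},\dots,x_n]$. Set $x'_j=\hat F_j/x_j$. Lexicographic order on $\mathbb{Z}^n$: $\mathbf{a}\prec\mathbf{a}'$ if the first nonzero entry of $\mathbf{a}'-\mathbf{a}$ is positive; the lexicographically first monomial of a polynomial is its term with $\prec$-smallest exponent vector. Condition 1.2: for every $k\in[1,n]$, with $M_k$ the lexicographically first monomial of $F_k$: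 (i) $\hat F_k=F_k$; (ii) $M_k=\mathbf{x}^{\mathbf{v}_k}=x_{k+1}^{v_{k+1,k}}\cdots x_n^{v_{n,k}}$ (coefficient $1$) with $\mathbf{v}_k\in\mathbb{Z}_{\ge0}^{n-k}$ for $k\in[1,n-1]$, and $M_n=1$; (iii) if $k\ne1$ and $F_k$ involves $x_1$, then every monomial of $F_k-M_k$ is divisible by $x_1$; (iv) if $k\notin\{1,2\}$, $F_k$ does not involve $x_1$, and there is $i\in[2,k-1]$ such that $x_k$ divides $M_i$, then every monomial of $F_k-M_k$ is divisible by $x_i$. Under (i), $x'_j=F_j/x_j\in R[x_1,x_2^{\pm1},\dots,x_n^{\pm1}]$ for $j\ge2$, so $R[x_2,x'_2,\dots,x_n,x'_n]\subseteq R[x_1,x_2^{\pm1},\dots,x_n^{\pm1}]$; $\varphi:R[x_2,x'_2,\dots,x_n,x'_n]\to R[x_2^{\pm1},\dots,x_n^{\pm1}]$ is the restriction of the $R$-algebra homomorphism $R[x_1,x_2^{\pm1},\dots,x_n^{\pm1}]\to R[x_2^{\pm1},\dots,x_n^{\pm1}]$ sending $x_1\mapsto0$ and $x_i^{\pm1}\mapsto x_i^{\pm1}$ ($i\ge2$). A standard monomial in $x_2,x'_2,\dots,x_n,x'_n$ is a monomial in these containing no product $x_ix'_i$; $R^{st}[x_2,x'_2,\dots,x_n,x'_n]$ denotes their $R$-linear span. *)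

theory Defs
  imports "HOL-Computational_Algebra.Factorial_Ring" "HOL-Library.Poly_Mapping"
begin

text \<open>Laurent polynomials over R in the variables x_1, ..., x_n (variables indexed by
  natural numbers 1..n): a monomial is a finitely supported exponent vector
  nat =>0 int, a Laurent polynomial a finitely supported coefficient function.
  The field of rational functions contains all rings appearing in the statement;
  the transcendence basis x is identified with the variables themselves.\<close>

type_synonym 'a lpoly = "(nat \<Rightarrow>\<^sub>0 int) \<Rightarrow>\<^sub>0 'a"

definition lconst :: "'a::comm_ring_1 \<Rightarrow> 'a lpoly" where
  "lconst r = Poly_Mapping.single 0 r"

definition Xv :: "nat \<Rightarrow> 'a::comm_ring_1 lpoly" where
  "Xv i = Poly_Mapping.single (Poly_Mapping.single i 1) 1"

definition Xinv :: "nat \<Rightarrow> 'a::comm_ring_1 lpoly" where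
  "Xinv i = Poly_Mapping.single (Poly_Mapping.single i (-1)) 1"

definition lmonom :: "(nat \<Rightarrow>\<^sub>0 int) \<Rightarrow> 'a::comm_ring_1 \<Rightarrow> 'a lpoly" where
  "lmonom e c = Poly_Mapping.single e c"

definition is_poly :: "nat \<Rightarrow> 'a::comm_ring_1 lpoly \<Rightarrow> bool" where
  "is_poly n p \<longleftrightarrow> (\<forall>m \<in> Poly_Mapping.keys p. \<forall>i. Poly_Mapping.lookup m i \<noteq> 0 \<longrightarrow> i \<in> {1..n} \<and> Poly_Mapping.lookup m i > 0)"

definition units_in :: "('a::comm_ring_1 lpoly \<Rightarrow> bool) \<Rightarrow> 'a lpoly \<Rightarrow> bool" where
  "units_in S u \<longleftrightarrow> S u \<and> (\<exists>v. S v \<and> u * v = 1)"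

definition dvd_in :: "('a::comm_ring_1 lpoly \<Rightarrow> bool) \<Rightarrow> 'a lpoly \<Rightarrow> 'a lpoly \<Rightarrow> bool" where
  "dvd_in S a b \<longleftrightarrow> (\<exists>c. S c \<and> b = a * c)"

definition irreducible_poly :: "nat \<Rightarrow> 'a::comm_ring_1 lpoly \<Rightarrow> bool" where
  "irreducible_poly n p \<longleftrightarrow> is_poly n p \<and> p \<noteq> 0 \<and> \<not> units_in (is_poly n) p \<and>
     (\<forall>g h. is_poly n g \<longrightarrow> is_poly n h \<longrightarrow> p = g * h \<longrightarrow>
        units_in (is_poly n) g \<or> units_in (is_poly n) h)"

definition involves :: "'a::comm_ring_1 lpoly \<Rightarrow> nat \<Rightarrow> bool" where
  "involves p i \<longleftrightarrow> (\<exists>m \<in> Poly_Mapping.keys p. Poly_Mapping.lookup m i \<noteq> 0)"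

text \<open>The ring R[x_1,...,x_{k-1},(x'_k)^{-1},x_{k+1},...,x_n]; the new variable x'_k
  occupies the slot of the variable index k.\<close>
definition ring_k :: "nat \<Rightarrow> nat \<Rightarrow> 'a::comm_ring_1 lpoly \<Rightarrow> bool" where
  "ring_k n k p \<longleftrightarrow> (\<forall>m \<in> Poly_Mapping.keys p. (\<forall>i. Poly_Mapping.lookup m i \<noteq> 0 \<longrightarrow> i \<in> {1..n}) \<and>
      (\<forall>i. i \<noteq> k \<longrightarrow> Poly_Mapping.lookup m i \<ge> 0) \<and> Poly_Mapping.lookup m k \<le> 0)"

text \<open>p|_{x_k <- G / x'_k}, for p a polynomial and G not involving x_k; x'_k is
  again represented by the variable of index k.\<close>
definition subst_k :: "nat \<Rightarrow> 'a::comm_ring_1 lpoly \<Rightarrow> 'a lpoly \<Rightarrow> 'a lpoly" where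
  "subst_k k G p = (\<Sum>m \<in> Poly_Mapping.keys p.
      lmonom (m - Poly_Mapping.single k (Poly_Mapping.lookup m k)) (Poly_Mapping.lookup p m) *
      G ^ nat (Poly_Mapping.lookup m k) * Xinv k ^ nat (Poly_Mapping.lookup m k))"

definition exch_exp :: "nat \<Rightarrow> (nat \<Rightarrow> 'a::comm_ring_1 lpoly) \<Rightarrow> nat \<Rightarrow> nat \<Rightarrow> nat" where
  "exch_exp n F j k = (GREATEST a. dvd_in (ring_k n k) (F k ^ a) (subst_k k (F k) (F j)))"

definition hatF :: "nat \<Rightarrow> (nat \<Rightarrow> 'a::comm_ring_1 lpoly) \<Rightarrow> nat \<Rightarrow> 'a lpoly" where
  "hatF n F j = F j * (\<Prod>k \<in> {1..n} - {j}. Xinv k ^ exch_exp n F j k)"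

definition xprime :: "nat \<Rightarrow> (nat \<Rightarrow> 'a::comm_ring_1 lpoly) \<Rightarrow> nat \<Rightarrow> 'a lpoly" where
  "xprime n F j = hatF n F j * Xinv j"

definition LP_seed :: "nat \<Rightarrow> (nat \<Rightarrow> 'a::comm_ring_1 lpoly) \<Rightarrow> bool" where
  "LP_seed n F \<longleftrightarrow> (\<forall>i \<in> {1..n}. irreducible_poly n (F i) \<and> \<not> involves (F i) i \<and>
        (\<forall>j \<in> {1..n}. \<not> dvd_in (is_poly n) (Xv j) (F i)))"

definition lex_less :: "nat \<Rightarrow> (nat \<Rightarrow>\<^sub>0 int) \<Rightarrow> (nat \<Rightarrow>\<^sub>0 int) \<Rightarrow> bool" where
  "lex_less n a b \<longleftrightarrow> (\<exists>i \<in> {1..n}. (\<forall>j \<in> {1..<i}. Poly_Mapping.lookup a j = Poly_Mapping.lookup b j) \<and> Poly_Mapping.lookup a i < Poly_Mapping.lookup b i)"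

definition lexfirst_exp :: "nat \<Rightarrow> 'a::comm_ring_1 lpoly \<Rightarrow> nat \<Rightarrow>\<^sub>0 int" where
  "lexfirst_exp n p = (THE e. e \<in> Poly_Mapping.keys p \<and> (\<forall>e' \<in> Poly_Mapping.keys p. e' \<noteq> e \<longrightarrow> lex_less n e e'))"

definition lexfirst :: "nat \<Rightarrow> 'a::comm_ring_1 lpoly \<Rightarrow> 'a lpoly" where
  "lexfirst n p = lmonom (lexfirst_exp n p) (Poly_Mapping.lookup p (lexfirst_exp n p))"

definition divisible_by_var :: "nat \<Rightarrow> (nat \<Rightarrow>\<^sub>0 int) \<Rightarrow> bool" where
  "divisible_by_var i m \<longleftrightarrow> Poly_Mapping.lookup m i > 0"

definition condition_1_2 :: "nat \<Rightarrow> (nat \<Rightarrow> 'a::comm_ring_1 lpoly) \<Rightarrow> bool" where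
  "condition_1_2 n F \<longleftrightarrow> (\<forall>k \<in> {1..n}.
     hatF n F k = F k \<and>
     (k < n \<longrightarrow> Poly_Mapping.lookup (F k) (lexfirst_exp n (F k)) = 1 \<and>
        (\<forall>i. Poly_Mapping.lookup (lexfirst_exp n (F k)) i \<noteq> 0 \<longrightarrow> k < i \<and> i \<le> n \<and> Poly_Mapping.lookup (lexfirst_exp n (F k)) i > 0)) \<and>
     (k = n \<longrightarrow> lexfirst n (F k) = 1) \<and>
     (k \<noteq> 1 \<and> involves (F k) 1 \<longrightarrow>
        (\<forall>m \<in> Poly_Mapping.keys (F k - lexfirst n (F k)). divisible_by_var 1 m)) \<and>
     (k \<notin> {1, 2} \<and> \<not> involves (F k) 1 \<longrightarrow>
        (\<forall>i \<in> {2..k-1}. divisible_by_var k (lexfirst_exp n (F i)) \<longrightarrow>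
           (\<forall>m \<in> Poly_Mapping.keys (F k - lexfirst n (F k)). divisible_by_var i m))))"

inductive_set rspan :: "'a::comm_ring_1 lpoly set \<Rightarrow> 'a lpoly set" for S where
  zero: "0 \<in> rspan S"
| add: "s \<in> S \<Longrightarrow> p \<in> rspan S \<Longrightarrow> lconst r * s + p \<in> rspan S"

definition xmono :: "nat \<Rightarrow> (nat \<Rightarrow> 'a::comm_ring_1 lpoly) \<Rightarrow> (nat \<Rightarrow> nat) \<Rightarrow> (nat \<Rightarrow> nat) \<Rightarrow> 'a lpoly" where
  "xmono n F a b = (\<Prod>i \<in> {2..n}. Xv i ^ a i * xprime n F i ^ b i)"

text \<open>R[x_2,x'_2,...,x_n,x'_n]: the R-span of all monomials in these elements\<close>
definition alg_A :: "nat \<Rightarrow> (nat \<Rightarrow> 'a::comm_ring_1 lpoly) \<Rightarrow> 'a lpoly set" where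
  "alg_A n F = rspan {xmono n F a b | a b. True}"

text \<open>R^st[x_2,x'_2,...,x_n,x'_n]: the R-span of standard monomials (no x_i x'_i)\<close>
definition alg_st :: "nat \<Rightarrow> (nat \<Rightarrow> 'a::comm_ring_1 lpoly) \<Rightarrow> 'a lpoly set" where
  "alg_st n F = rspan {xmono n F a b | a b. \<forall>i \<in> {2..n}. a i = 0 \<or> b i = 0}"

text \<open>phi: x_1 -> 0, x_i^{+-1} -> x_i^{+-1} (i >= 2), on elements with nonnegative x_1-degree\<close>
definition phi :: "'a::comm_ring_1 lpoly \<Rightarrow> 'a lpoly" where
  "phi p = (\<Sum>m \<in> Poly_Mapping.keys p. if Poly_Mapping.lookup m 1 = 0 then lmonom m (Poly_Mapping.lookup p m) else 0)"

end

theory Submission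
  imports Defs
begin

text \<open>The specialisation \<open>phi\<close> (\<open>x\<^sub>1 \<mapsto> 0\<close>) is \<open>R\<close>-linear, and it is multiplicative on
  elements of nonnegative \<open>x\<^sub>1\<close>-degree, which includes every \<open>x\<^sub>i\<close> and \<open>x'\<^sub>i = F\<^sub>i/x\<^sub>i\<close>
  with \<open>i \<ge> 2\<close>. Since \<open>x\<^sub>i x'\<^sub>i = F\<^sub>i\<close> and \<open>phi F\<^sub>i\<close> is a polynomial in \<open>x\<^sub>2, \<dots>, x\<^sub>n\<close>, every
  monomial in the \<open>x\<^sub>i, x'\<^sub>i\<close> has the same image as an \<open>R\<close>-combination of standard
  monomials (induction on the number of primed factors); hence \<open>phi(A) = phi(A\<^sup>s\<^sup>t)\<close>, which
  gives \<open>A = ker phi + A\<^sup>s\<^sup>t\<close>.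

  For injectivity on \<open>A\<^sup>s\<^sup>t\<close>: by Condition 1.2 the lexicographically first monomial
  \<open>M\<^sub>i\<close> of \<open>F\<^sub>i\<close> has coefficient 1, does not involve \<open>x\<^sub>1\<close> and only involves \<open>x\<^sub>j\<close> with
  \<open>j > i\<close>. So the image of a standard monomial \<open>x\<^sup>a x'\<^sup>b\<close> has the monic least term
  \<open>x^(a - b) \<Prod>\<^sub>i M\<^sub>i^b\<^sub>i\<close>, from whose exponent \<open>a\<^sub>j - b\<^sub>j\<close>, and hence \<open>a\<^sub>j\<close> and \<open>b\<^sub>j\<close>,
  are recovered by induction on \<open>j\<close>. Distinct standard monomials therefore have images with
  distinct monic least terms, and such images are linearly independent.\<close>

lemma lookup_lconst_mult [simp]:
  "Poly_Mapping.lookup (lconst c * p) m = c * Poly_Mapping.lookup p m"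
proof -
  have "lconst c * p = Poly_Mapping.map ((*) c) p"
    by (simp add: lconst_def mult_map_scale_conv_mult)
  then show ?thesis by (simp add: map.rep_eq when_def)
qed

lemma lconst_mult_lconst: "lconst a * lconst b = lconst (a * b)"
  by (simp add: lconst_def mult_single)

lemma lconst_add: "lconst (a + b) = lconst a + lconst b"
  by (simp add: lconst_def single_add)

lemma lconst_0 [simp]: "lconst 0 = 0"
  by (simp add: lconst_def)

lemma lconst_1 [simp]: "lconst 1 = 1"
  by (simp add: lconst_def)

lemma lconst_mult_single: "lconst c * Poly_Mapping.single m 1 = Poly_Mapping.single m c"
  by (simp add: lconst_def mult_single)

lemma poly_mapping_sum_single:
  assumes "finite J" "Poly_Mapping.keys p \<subseteq> J"
  shows "p = (\<Sum>m\<in>J. Poly_Mapping.single m (Poly_Mapping.lookup p m))"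
proof (rule poly_mapping_eqI)
  fix k
  have "Poly_Mapping.lookup p k = 0" if "k \<notin> J"
    using that assms(2) by (auto simp: in_keys_iff)
  then show "Poly_Mapping.lookup p k =
      Poly_Mapping.lookup (\<Sum>m\<in>J. Poly_Mapping.single m (Poly_Mapping.lookup p m)) k"
    using assms(1) by (simp add: lookup_sum lookup_single when_def)
qed

subsection \<open>Linear spans\<close>

lemma rspan_add: "p \<in> rspan S \<Longrightarrow> q \<in> rspan S \<Longrightarrow> p + q \<in> rspan S"
  by (induction p rule: rspan.induct) (auto simp: add.assoc intro: rspan.add)

lemma rspan_smult: "p \<in> rspan S \<Longrightarrow> lconst c * p \<in> rspan S"
proof (induction p rule: rspan.induct)
  case (add s p r)
  have "lconst c * (lconst r * s + p) = lconst (c * r) * s + lconst c * p"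
    by (simp add: algebra_simps lconst_mult_lconst[symmetric])
  then show ?case using add by (simp add: rspan.add)
qed (simp add: rspan.zero)

lemma rspan_base: "s \<in> S \<Longrightarrow> s \<in> rspan S"
  using rspan.add[of s S 0 1] by (simp add: rspan.zero)

lemma rspan_diff:
  fixes p q :: "'a::comm_ring_1 lpoly"
  assumes "p \<in> rspan S" "q \<in> rspan S"
  shows "p - q \<in> rspan S"
proof -
  have "lconst (-1) * q = - q"
    by (rule poly_mapping_eqI) simp
  then show ?thesis
    using rspan_add[OF assms(1) rspan_smult[OF assms(2), of "-1"]] by simp
qed

lemma rspan_sum: "finite I \<Longrightarrow> (\<And>i. i \<in> I \<Longrightarrow> f i \<in> rspan S) \<Longrightarrow> sum f I \<in> rspan S"
  by (induction I rule: finite_induct) (auto intro: rspan_add rspan.zero)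

lemma rspan_subset_rspan: "S \<subseteq> rspan T \<Longrightarrow> rspan S \<subseteq> rspan T"
proof
  fix p assume "p \<in> rspan S" and "S \<subseteq> rspan T"
  then show "p \<in> rspan T"
    by (induction p rule: rspan.induct) (auto intro: rspan_add rspan_smult rspan.zero)
qed

lemma rspan_image:
  assumes f_add: "\<And>p q. f (p + q) = f p + f q"
    and f_smult: "\<And>c p. f (lconst c * p) = lconst c * f p"
  shows "f ` rspan S = rspan (f ` S)"
proof
  have f0: "f 0 = 0"
    using f_add[of 0 0] by simp
  show "f ` rspan S \<subseteq> rspan (f ` S)"
  proof
    fix q assume "q \<in> f ` rspan S"
    then obtain p where "p \<in> rspan S" "q = f p" by blast
    then show "q \<in> rspan (f ` S)"
      by (induction p arbitrary: q rule: rspan.induct)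
         (auto simp: f0 f_add f_smult intro: rspan.intros)
  qed
  show "rspan (f ` S) \<subseteq> f ` rspan S"
  proof
    fix q assume "q \<in> rspan (f ` S)"
    then show "q \<in> f ` rspan S"
    proof (induction q rule: rspan.induct)
      case zero
      show ?case using f0 rspan.zero by force
    next
      case (add t q r)
      then obtain s p where "s \<in> S" "t = f s" "p \<in> rspan S" "q = f p" by blast
      then show ?case
        by (auto simp: f_add f_smult intro!: image_eqI[of _ f "lconst r * s + p"] rspan.add)
    qed
  qed
qed

lemma rspan_finite_sum:
  assumes "p \<in> rspan S"
  shows "\<exists>T c. finite T \<and> T \<subseteq> S \<and> p = (\<Sum>t\<in>T. lconst (c t) * t)"
  using assms
proof (induction p rule: rspan.induct)
  case zero
  show ?case by (rule exI[of _ "{}"]) simp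
next
  case (add s p r)
  then obtain T c where T: "finite T" "T \<subseteq> S" and p: "p = (\<Sum>t\<in>T. lconst (c t) * t)"
    by blast
  define c' where "c' = (\<lambda>t. if t \<in> T then c t else 0)(s := r + (if s \<in> T then c s else 0))"
  have "(\<Sum>t\<in>insert s T. lconst (c' t) * t) = lconst (c' s) * s + (\<Sum>t\<in>T - {s}. lconst (c t) * t)"
    using T(1) by (simp add: sum.insert_remove c'_def)
  also have "\<dots> = lconst r * s + p"
    using T(1) by (cases "s \<in> T") (simp_all add: p c'_def lconst_add sum.remove distrib_right add.assoc)
  finally show ?case
    using T add.hyps(1) by (intro exI[of _ "insert s T"] exI[of _ c']) auto
qed

subsection \<open>The specialisation \<open>x\<^sub>1 \<mapsto> 0\<close>\<close>

lemma lookup_phi: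
  "Poly_Mapping.lookup (phi p) m =
     (if Poly_Mapping.lookup m 1 = 0 then Poly_Mapping.lookup p m else 0)"
proof -
  have "Poly_Mapping.lookup (phi p) m = (\<Sum>m'\<in>Poly_Mapping.keys p.
     (if Poly_Mapping.lookup m' 1 = 0 then Poly_Mapping.lookup p m' else 0) when m' = m)"
    unfolding phi_def lookup_sum
    by (rule sum.cong) (auto simp: lmonom_def lookup_single when_def)
  also have "\<dots> = (if Poly_Mapping.lookup m 1 = 0 then Poly_Mapping.lookup p m else 0)"
    by (cases "m \<in> Poly_Mapping.keys p") (auto simp: when_def in_keys_iff)
  finally show ?thesis .
qed

lemma keys_phi: "Poly_Mapping.keys (phi p) = {m \<in> Poly_Mapping.keys p. Poly_Mapping.lookup m 1 = 0}"
  by (auto simp: in_keys_iff lookup_phi split: if_splits)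

lemma phi_add: "phi (p + q) = phi p + phi q"
  by (rule poly_mapping_eqI) (simp add: lookup_phi lookup_add)

lemma phi_diff: "phi (p - q) = phi p - phi (q :: 'a::comm_ring_1 lpoly)"
  by (rule poly_mapping_eqI) (simp add: lookup_phi lookup_minus)

lemma phi_lconst: "phi (lconst c * p) = lconst c * phi p"
  by (rule poly_mapping_eqI) (simp add: lookup_phi)

lemma phi_0 [simp]: "phi 0 = 0"
  by (rule poly_mapping_eqI) (simp add: lookup_phi)

lemma phi_sum: "phi (\<Sum>x\<in>T. f x) = (\<Sum>x\<in>T. phi (f x))"
  by (induction T rule: infinite_finite_induct) (simp_all add: phi_add)

lemma phi_eq_self: "(\<And>m. m \<in> Poly_Mapping.keys p \<Longrightarrow> Poly_Mapping.lookup m 1 = 0) \<Longrightarrow> phi p = p"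
  by (rule poly_mapping_eqI) (auto simp: lookup_phi in_keys_iff)

lemma phi_eq_0: "(\<And>m. m \<in> Poly_Mapping.keys p \<Longrightarrow> Poly_Mapping.lookup m 1 \<noteq> 0) \<Longrightarrow> phi p = 0"
  by (rule poly_mapping_eqI) (auto simp: lookup_phi in_keys_iff)

lemma phi_phi: "phi (phi p) = phi p"
  by (rule phi_eq_self) (simp add: keys_phi)

lemma phi_1 [simp]: "phi 1 = 1"
  by (rule phi_eq_self) simp

definition deg1_nonneg :: "'a::comm_ring_1 lpoly \<Rightarrow> bool" where
  "deg1_nonneg p \<longleftrightarrow> (\<forall>m\<in>Poly_Mapping.keys p. Poly_Mapping.lookup m 1 \<ge> 0)"

lemma keys_mult_lookupE:
  assumes "m \<in> Poly_Mapping.keys (p * q)"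
  obtains u v where "u \<in> Poly_Mapping.keys p" "v \<in> Poly_Mapping.keys q"
    "Poly_Mapping.lookup m i = Poly_Mapping.lookup u i + Poly_Mapping.lookup v i"
  using subsetD[OF keys_mult assms] by (auto simp: lookup_add)

lemma deg1_nonneg_mult: "deg1_nonneg p \<Longrightarrow> deg1_nonneg q \<Longrightarrow> deg1_nonneg (p * q)"
  unfolding deg1_nonneg_def by (metis add_nonneg_nonneg keys_mult_lookupE)

lemma deg1_nonneg_1: "deg1_nonneg 1"
  by (simp add: deg1_nonneg_def)

lemma deg1_nonneg_prod: "(\<And>i. i \<in> I \<Longrightarrow> deg1_nonneg (f i)) \<Longrightarrow> deg1_nonneg (\<Prod>i\<in>I. f i)"
  by (induction I rule: infinite_finite_induct) (simp_all add: deg1_nonneg_1 deg1_nonneg_mult)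

lemma deg1_nonneg_power: "deg1_nonneg p \<Longrightarrow> deg1_nonneg (p ^ k)"
  using deg1_nonneg_prod[of "{..<k}" "\<lambda>_. p"] by simp

lemma deg1_nonneg_phi: "deg1_nonneg (phi p)"
  by (simp add: deg1_nonneg_def keys_phi)

text \<open>When both factors have nonnegative \<open>x\<^sub>1\<close>-degree, a product term of \<open>x\<^sub>1\<close>-degree 0
  can only come from two factors of \<open>x\<^sub>1\<close>-degree 0.\<close>

lemma phi_mult:
  assumes p: "deg1_nonneg p" and q: "deg1_nonneg q"
  shows "phi (p * q) = phi p * phi q"
proof -
  define p1 where "p1 = p - phi p"
  define q1 where "q1 = q - phi q"
  have p1_pos: "Poly_Mapping.lookup m 1 > 0" if "m \<in> Poly_Mapping.keys p1" for m
    using that p unfolding p1_def deg1_nonneg_def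
    by (force simp: in_keys_iff lookup_minus lookup_phi split: if_splits)
  have q1_pos: "Poly_Mapping.lookup m 1 > 0" if "m \<in> Poly_Mapping.keys q1" for m
    using that q unfolding q1_def deg1_nonneg_def
    by (force simp: in_keys_iff lookup_minus lookup_phi split: if_splits)
  have "p * q = phi p * phi q + (phi p * q1 + p1 * q)"
    unfolding p1_def q1_def by (simp add: algebra_simps)
  moreover have "phi (phi p * q1) = 0"
  proof (rule phi_eq_0)
    fix m assume "m \<in> Poly_Mapping.keys (phi p * q1)"
    then show "Poly_Mapping.lookup m 1 \<noteq> 0"
      by (rule keys_mult_lookupE[where i = 1]) (auto simp: keys_phi dest: q1_pos)
  qed
  moreover have "phi (p1 * q) = 0"
  proof (rule phi_eq_0)
    fix m assume "m \<in> Poly_Mapping.keys (p1 * q)"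
    then show "Poly_Mapping.lookup m 1 \<noteq> 0"
      by (rule keys_mult_lookupE[where i = 1]) (use p1_pos q in \<open>force simp: deg1_nonneg_def\<close>)
  qed
  moreover have "phi (phi p * phi q) = phi p * phi q"
  proof (rule phi_eq_self)
    fix m assume "m \<in> Poly_Mapping.keys (phi p * phi q)"
    then show "Poly_Mapping.lookup m 1 = 0"
      by (rule keys_mult_lookupE[where i = 1]) (auto simp: keys_phi)
  qed
  ultimately show ?thesis by (simp add: phi_add)
qed

lemma phi_prod:
  "(\<And>i. i \<in> I \<Longrightarrow> deg1_nonneg (f i)) \<Longrightarrow> phi (\<Prod>i\<in>I. f i) = (\<Prod>i\<in>I. phi (f i))"
  by (induction I rule: infinite_finite_induct) (simp_all add: phi_mult deg1_nonneg_prod)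

lemma phi_power: "deg1_nonneg p \<Longrightarrow> phi (p ^ k) = phi p ^ k"
  using phi_prod[of "{..<k}" "\<lambda>_. p"] by simp

subsection \<open>Monic least terms\<close>

definition monic_least_term ::
    "('k::linorder \<Rightarrow>\<^sub>0 'a::comm_ring_1) \<Rightarrow> 'k \<Rightarrow> bool" where
  "monic_least_term p e \<longleftrightarrow> Poly_Mapping.lookup p e = 1 \<and> (\<forall>m\<in>Poly_Mapping.keys p. e \<le> m)"

lemma monic_least_term_single: "monic_least_term (Poly_Mapping.single e 1) e"
  by (simp add: monic_least_term_def)

lemma monic_least_term_1: "monic_least_term 1 0"
  by (simp add: monic_least_term_def)

lemma monic_least_term_tail:
  assumes p: "monic_least_term p e" and m: "m \<in> Poly_Mapping.keys (p - Poly_Mapping.single e 1)"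
  shows "e < m"
proof -
  have "m \<noteq> e"
    using m p by (auto simp: monic_least_term_def in_keys_iff lookup_minus)
  moreover have "m \<in> Poly_Mapping.keys p"
    using m \<open>m \<noteq> e\<close> by (simp add: in_keys_iff lookup_minus lookup_single)
  ultimately show ?thesis
    using p by (simp add: monic_least_term_def le_neq_trans)
qed

lemma monic_least_term_mult:
  fixes p q :: "'k::{linorder, ordered_cancel_comm_monoid_add} \<Rightarrow>\<^sub>0 'a::comm_ring_1"
  assumes p: "monic_least_term p e" and q: "monic_least_term q f"
  shows "monic_least_term (p * q) (e + f)"
proof -
  define r where "r = p - Poly_Mapping.single e 1"
  define s where "s = q - Poly_Mapping.single f 1"
  define t where "t = Poly_Mapping.single e 1 * s + r * q"
  have "p * q = (Poly_Mapping.single e 1 + r) * q"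
    by (simp add: r_def)
  also have "\<dots> = Poly_Mapping.single e 1 * (Poly_Mapping.single f 1 + s) + r * q"
    by (simp add: distrib_right s_def)
  also have "\<dots> = Poly_Mapping.single (e + f) 1 + t"
    by (simp add: distrib_left t_def mult_single add.assoc)
  finally have pq: "p * q = Poly_Mapping.single (e + f) 1 + t" .
  have t_gt: "e + f < m" if "m \<in> Poly_Mapping.keys t" for m
  proof -
    have "m \<in> Poly_Mapping.keys (Poly_Mapping.single e 1 * s) \<union> Poly_Mapping.keys (r * q)"
      using that unfolding t_def by (rule subsetD[OF keys_add])
    then show ?thesis
    proof
      assume "m \<in> Poly_Mapping.keys (Poly_Mapping.single e 1 * s)"
      then obtain u v where "m = u + v" "u \<in> Poly_Mapping.keys (Poly_Mapping.single e (1::'a))"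
          "v \<in> Poly_Mapping.keys s"
        using keys_mult by blast
      moreover have "f < v"
        using monic_least_term_tail[OF q] \<open>v \<in> Poly_Mapping.keys s\<close> unfolding s_def .
      ultimately show ?thesis
        by (simp add: add_strict_left_mono)
    next
      assume "m \<in> Poly_Mapping.keys (r * q)"
      then obtain u v where "m = u + v" "u \<in> Poly_Mapping.keys r" "v \<in> Poly_Mapping.keys q"
        using keys_mult by blast
      moreover have "e < u"
        using monic_least_term_tail[OF p] \<open>u \<in> Poly_Mapping.keys r\<close> unfolding r_def .
      moreover have "f \<le> v"
        using q \<open>v \<in> Poly_Mapping.keys q\<close> by (simp add: monic_least_term_def)
      ultimately show ?thesis
        by (simp add: add_less_le_mono)
    qed
  qed
  then have "Poly_Mapping.lookup t (e + f) = 0"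
    by (auto simp: in_keys_iff)
  moreover have "e + f \<le> m" if "m \<in> Poly_Mapping.keys (p * q)" for m
  proof (cases "m = e + f")
    case False
    then have "m \<in> Poly_Mapping.keys t"
      using that by (simp add: pq in_keys_iff lookup_add lookup_single)
    then show ?thesis using t_gt by (simp add: less_imp_le)
  qed simp
  ultimately show ?thesis by (simp add: monic_least_term_def pq lookup_add)
qed

lemma monic_least_term_prod:
  fixes p :: "'b \<Rightarrow> 'k::{linorder, ordered_cancel_comm_monoid_add} \<Rightarrow>\<^sub>0 'a::comm_ring_1"
  assumes "finite I" "\<And>i. i \<in> I \<Longrightarrow> monic_least_term (p i) (e i)"
  shows "monic_least_term (\<Prod>i\<in>I. p i) (\<Sum>i\<in>I. e i)"
  using assms
  by (induction I rule: finite_induct)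
     (simp_all add: monic_least_term_mult monic_least_term_1)

lemma monic_least_term_power:
  fixes p :: "'k::{linorder, ordered_cancel_comm_monoid_add} \<Rightarrow>\<^sub>0 'a::comm_ring_1"
  shows "monic_least_term p e \<Longrightarrow> monic_least_term (p ^ k) (\<Sum>_<k. e)"
  using monic_least_term_prod[of "{..<k}" "\<lambda>_. p" "\<lambda>_. e"] by simp

text \<open>Elements with pairwise distinct monic least terms are linearly independent: the smallest
  least term among those with nonzero coefficient occurs in exactly one summand.\<close>

lemma monic_least_terms_independent:
  fixes P :: "'b \<Rightarrow> 'a::comm_ring_1 lpoly"
  assumes fin: "finite T" and lt: "\<And>x. x \<in> T \<Longrightarrow> monic_least_term (P x) (E x)"
    and inj: "inj_on E T" and zero: "(\<Sum>x\<in>T. lconst (c x) * P x) = 0"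
  shows "\<forall>x\<in>T. c x = 0"
proof (rule ccontr)
  define T0 where "T0 = {x\<in>T. c x \<noteq> 0}"
  assume "\<not> (\<forall>x\<in>T. c x = 0)"
  then have "T0 \<noteq> {}" "finite T0" using fin unfolding T0_def by auto
  then have "Min (E ` T0) \<in> E ` T0" by simp
  then obtain x0 where x0: "x0 \<in> T0" "E x0 = Min (E ` T0)" by (metis imageE)
  have "c x * Poly_Mapping.lookup (P x) (E x0) = 0" if x: "x \<in> T - {x0}" for x
  proof (cases "x \<in> T0")
    case True
    have "E x \<noteq> E x0"
      using inj x x0(1) unfolding T0_def by (auto dest: inj_onD)
    moreover have "E x0 \<le> E x"
      unfolding x0(2) using \<open>finite T0\<close> True by simp
    ultimately have "E x0 < E x" by simp
    then have "E x0 \<notin> Poly_Mapping.keys (P x)"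
      using lt[of x] x unfolding monic_least_term_def by (meson DiffD1 leD)
    then show ?thesis by (simp add: in_keys_iff)
  qed (use x in \<open>simp add: T0_def\<close>)
  then have sum0: "(\<Sum>x\<in>T - {x0}. c x * Poly_Mapping.lookup (P x) (E x0)) = 0"
    by (intro sum.neutral) blast
  have "x0 \<in> T" "c x0 \<noteq> 0"
    using x0(1) by (simp_all add: T0_def)
  have "Poly_Mapping.lookup (\<Sum>x\<in>T. lconst (c x) * P x) (E x0) =
      (\<Sum>x\<in>T. c x * Poly_Mapping.lookup (P x) (E x0))"
    by (simp add: lookup_sum)
  also have "\<dots> = c x0 * Poly_Mapping.lookup (P x0) (E x0)"
    using fin \<open>x0 \<in> T\<close> sum0 by (simp add: sum.remove)
  also have "\<dots> = c x0"
    using lt[OF \<open>x0 \<in> T\<close>] by (simp add: monic_least_term_def)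
  finally show False
    using zero \<open>c x0 \<noteq> 0\<close> by simp
qed

lemma less_poly_mapping_iff_less_fun:
  "a < b \<longleftrightarrow> less_fun (Poly_Mapping.lookup a) (Poly_Mapping.lookup b)"
  by transfer simp

lemma lex_less_iff_less:
  assumes a: "Poly_Mapping.keys a \<subseteq> {1..n}" and b: "Poly_Mapping.keys b \<subseteq> {1..n}"
  shows "lex_less n a b \<longleftrightarrow> a < b"
proof
  assume "lex_less n a b"
  then obtain i where i: "i \<in> {1..n}" "\<forall>j\<in>{1..<i}. Poly_Mapping.lookup a j = Poly_Mapping.lookup b j"
      "Poly_Mapping.lookup a i < Poly_Mapping.lookup b i"
    unfolding lex_less_def by blast
  have "Poly_Mapping.lookup a j = Poly_Mapping.lookup b j" if "j < i" for j
  proof (cases "j = 0")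
    case True
    then have "j \<notin> Poly_Mapping.keys a" "j \<notin> Poly_Mapping.keys b"
      using a b by auto
    then show ?thesis by (simp add: in_keys_iff)
  qed (use i(2) that in auto)
  then show "a < b"
    unfolding less_poly_mapping_iff_less_fun less_fun_def using i(3) by blast
next
  assume "a < b"
  then obtain k where k: "Poly_Mapping.lookup a k < Poly_Mapping.lookup b k"
      "\<And>k'. k' < k \<Longrightarrow> Poly_Mapping.lookup a k' = Poly_Mapping.lookup b k'"
    unfolding less_poly_mapping_iff_less_fun by (elim less_funE) blast
  then have "k \<in> Poly_Mapping.keys a \<union> Poly_Mapping.keys b"
    by (auto simp: in_keys_iff)
  then have "k \<in> {1..n}"
    using a b by blast
  then show "lex_less n a b"
    unfolding lex_less_def using k by fastforce
qed

lemma lexfirst_exp_eq_Min: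
  assumes "p \<noteq> 0" and keys: "\<And>m. m \<in> Poly_Mapping.keys p \<Longrightarrow> Poly_Mapping.keys m \<subseteq> {1..n}"
  shows "lexfirst_exp n p = Min (Poly_Mapping.keys p)"
  unfolding lexfirst_exp_def
proof (rule the_equality)
  define e where "e = Min (Poly_Mapping.keys p)"
  have e: "e \<in> Poly_Mapping.keys p" and e_le: "\<And>m. m \<in> Poly_Mapping.keys p \<Longrightarrow> e \<le> m"
    using assms(1) by (simp_all add: e_def)
  show "e \<in> Poly_Mapping.keys p \<and> (\<forall>e'\<in>Poly_Mapping.keys p. e' \<noteq> e \<longrightarrow> lex_less n e e')"
    using e e_le keys by (auto simp: lex_less_iff_less order.order_iff_strict)
  fix e' assume e': "e' \<in> Poly_Mapping.keys p \<and> (\<forall>m\<in>Poly_Mapping.keys p. m \<noteq> e' \<longrightarrow> lex_less n e' m)"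
  show "e' = e"
  proof (rule ccontr)
    assume "e' \<noteq> e"
    then have "lex_less n e' e"
      using e e' by auto
    then have "e' < e"
      using lex_less_iff_less[OF keys keys] e e' by blast
    then show False
      using e_le e' by (simp add: leD)
  qed
qed

lemma Xv_Xinv: "Xv i * Xinv i = 1"
  by (simp add: Xv_def Xinv_def mult_single flip: single_add)

lemma Xv_power: "Xv i ^ k = Poly_Mapping.single (Poly_Mapping.single i (int k)) 1"
  by (induction k) (simp_all add: Xv_def mult_single add.commute flip: single_add)

lemma prod_single_1:
  "(\<Prod>j\<in>J. Poly_Mapping.single (f j) (1::'a::comm_semiring_1)) = Poly_Mapping.single (\<Sum>j\<in>J. f j) 1"
  by (induction J rule: infinite_finite_induct) (simp_all add: mult_single)

lemma single_eq_prod_Xv_power: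
  assumes "finite J" "Poly_Mapping.keys m \<subseteq> J" "\<And>j. 0 \<le> Poly_Mapping.lookup m j"
  shows "Poly_Mapping.single m 1 = (\<Prod>j\<in>J. Xv j ^ nat (Poly_Mapping.lookup m j))"
proof -
  have "(\<Prod>j\<in>J. Xv j ^ nat (Poly_Mapping.lookup m j)) =
      (\<Prod>j\<in>J. Poly_Mapping.single (Poly_Mapping.single j (Poly_Mapping.lookup m j)) 1)"
    using assms(3) by (simp add: Xv_power)
  also have "\<dots> = Poly_Mapping.single m 1"
    using poly_mapping_sum_single[OF assms(1,2)] by (simp add: prod_single_1)
  finally show ?thesis ..
qed

lemma xmono_cong:
  "(\<And>i. i \<in> {2..n} \<Longrightarrow> a i = a' i \<and> b i = b' i) \<Longrightarrow> xmono n F a b = xmono n F a' b'"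
  unfolding xmono_def by (rule prod.cong) auto

lemma single_mult_xmono:
  assumes "Poly_Mapping.keys m \<subseteq> {2..n}" "\<And>j. 0 \<le> Poly_Mapping.lookup m j"
  shows "Poly_Mapping.single m 1 * xmono n F a b = xmono n F (\<lambda>j. a j + nat (Poly_Mapping.lookup m j)) b"
  unfolding single_eq_prod_Xv_power[OF finite_atLeastAtMost assms] xmono_def
  by (simp add: prod.distrib[symmetric] power_add mult_ac)

lemma xmono_remove:
  "i \<in> {2..n} \<Longrightarrow> xmono n F a b =
     Xv i ^ a i * xprime n F i ^ b i * (\<Prod>j\<in>{2..n} - {i}. Xv j ^ a j * xprime n F j ^ b j)"
  unfolding xmono_def by (simp add: prod.remove)

lemma deg1_nonneg_Xv: "deg1_nonneg (Xv i)"
  by (simp add: deg1_nonneg_def Xv_def)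

lemma deg1_nonneg_Xinv: "i \<noteq> 1 \<Longrightarrow> deg1_nonneg (Xinv i)"
  by (simp add: deg1_nonneg_def Xinv_def lookup_single)

lemma phi_Xv: "i \<noteq> 1 \<Longrightarrow> phi (Xv i) = Xv i"
  by (rule phi_eq_self) (simp add: Xv_def lookup_single)

lemma phi_Xinv: "i \<noteq> 1 \<Longrightarrow> phi (Xinv i) = Xinv i"
  by (rule phi_eq_self) (simp add: Xinv_def lookup_single)

subsection \<open>Standard monomials\<close>

text \<open>Of the seed only the following enters the proof: the \<open>F\<^sub>i\<close> (\<open>i \<ge> 2\<close>) are polynomials,
  part (i) of Condition 1.2, and part (ii), with the lexicographically first monomial
  \<open>M\<^sub>i\<close> of \<open>F\<^sub>i\<close> written as the least key of \<open>F\<^sub>i\<close>.\<close>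

locale standard_monomial_setting =
  fixes n :: nat and F :: "nat \<Rightarrow> 'a::comm_ring_1 lpoly"
  assumes is_poly_F: "i \<in> {2..n} \<Longrightarrow> is_poly n (F i)"
    and xprime_eq: "i \<in> {2..n} \<Longrightarrow> xprime n F i = F i * Xinv i"
    and lookup_F_Min: "i \<in> {2..n} \<Longrightarrow> Poly_Mapping.lookup (F i) (Min (Poly_Mapping.keys (F i))) = 1"
    and keys_Min_F: "i \<in> {2..n} \<Longrightarrow> Poly_Mapping.keys (Min (Poly_Mapping.keys (F i))) \<subseteq> {i<..n}"
begin

definition M :: "nat \<Rightarrow> nat \<Rightarrow>\<^sub>0 int" where
  "M i = Min (Poly_Mapping.keys (F i))"

definition G :: "nat \<Rightarrow> 'a lpoly" where
  "G i = phi (F i)"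

lemma keys_F:
  assumes "i \<in> {2..n}" "m \<in> Poly_Mapping.keys (F i)"
  shows "Poly_Mapping.keys m \<subseteq> {1..n}" and "0 \<le> Poly_Mapping.lookup m j"
proof -
  have m: "\<forall>k. Poly_Mapping.lookup m k \<noteq> 0 \<longrightarrow> k \<in> {1..n} \<and> Poly_Mapping.lookup m k > 0"
    using is_poly_F[OF assms(1)] assms(2) unfolding is_poly_def by blast
  then show "Poly_Mapping.keys m \<subseteq> {1..n}"
    by (auto simp: in_keys_iff)
  show "0 \<le> Poly_Mapping.lookup m j"
    using m by (cases "Poly_Mapping.lookup m j = 0") auto
qed

lemma keys_G:
  assumes "i \<in> {2..n}" "m \<in> Poly_Mapping.keys (G i)"
  shows "Poly_Mapping.keys m \<subseteq> {2..n}" and "0 \<le> Poly_Mapping.lookup m j"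
proof -
  have m: "m \<in> Poly_Mapping.keys (F i)" "Poly_Mapping.lookup m 1 = 0"
    using assms(2) by (simp_all add: G_def keys_phi)
  moreover have "{1..n} - {1} = {2..n}"
    by auto
  ultimately show "Poly_Mapping.keys m \<subseteq> {2..n}"
    using keys_F(1)[OF assms(1)] by (auto simp: in_keys_iff)
  show "0 \<le> Poly_Mapping.lookup m j"
    using keys_F(2)[OF assms(1) m(1)] .
qed

lemma deg1_nonneg_F: "i \<in> {2..n} \<Longrightarrow> deg1_nonneg (F i)"
  by (simp add: deg1_nonneg_def keys_F(2))

lemma deg1_nonneg_xprime: "i \<in> {2..n} \<Longrightarrow> deg1_nonneg (xprime n F i)"
  by (simp add: xprime_eq deg1_nonneg_mult deg1_nonneg_F deg1_nonneg_Xinv)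

lemma deg1_nonneg_xmono: "deg1_nonneg (xmono n F a b)"
  unfolding xmono_def
  by (intro deg1_nonneg_prod deg1_nonneg_mult deg1_nonneg_power deg1_nonneg_Xv deg1_nonneg_xprime)

lemma phi_xprime: "i \<in> {2..n} \<Longrightarrow> phi (xprime n F i) = G i * Xinv i"
  by (simp add: xprime_eq G_def phi_mult phi_Xinv deg1_nonneg_F deg1_nonneg_Xinv)

lemma phi_xmono: "phi (xmono n F a b) = (\<Prod>i\<in>{2..n}. Xv i ^ a i * (G i * Xinv i) ^ b i)"
  unfolding xmono_def
proof (rule trans[OF phi_prod prod.cong])
  fix i assume "i \<in> {2..n}"
  then show "deg1_nonneg (Xv i ^ a i * xprime n F i ^ b i)"
    by (simp add: deg1_nonneg_mult deg1_nonneg_power deg1_nonneg_Xv deg1_nonneg_xprime)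
  show "phi (Xv i ^ a i * xprime n F i ^ b i) = Xv i ^ a i * (G i * Xinv i) ^ b i"
    using \<open>i \<in> {2..n}\<close>
    by (simp add: phi_mult phi_power phi_Xv phi_xprime deg1_nonneg_power deg1_nonneg_Xv deg1_nonneg_xprime)
qed simp

lemma monic_least_term_G:
  assumes i: "i \<in> {2..n}"
  shows "monic_least_term (G i) (M i)"
proof -
  have "F i \<noteq> 0"
    using lookup_F_Min[OF i] by auto
  then have "\<forall>m\<in>Poly_Mapping.keys (F i). M i \<le> m"
    by (simp add: M_def)
  moreover have "Poly_Mapping.lookup (M i) 1 = 0"
    using keys_Min_F[OF i] i by (auto simp: M_def in_keys_iff)
  ultimately show ?thesis
    using lookup_F_Min[OF i] by (auto simp: monic_least_term_def G_def M_def lookup_phi keys_phi)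
qed

definition least_exp :: "(nat \<Rightarrow> nat) \<Rightarrow> (nat \<Rightarrow> nat) \<Rightarrow> nat \<Rightarrow>\<^sub>0 int" where
  "least_exp a b = (\<Sum>i\<in>{2..n}. (\<Sum>_<a i. Poly_Mapping.single i 1) +
                                (\<Sum>_<b i. M i + Poly_Mapping.single i (-1)))"

lemma monic_least_term_phi_xmono: "monic_least_term (phi (xmono n F a b)) (least_exp a b)"
  unfolding phi_xmono least_exp_def
  by (intro monic_least_term_prod monic_least_term_mult monic_least_term_power monic_least_term_G)
     (auto simp: Xv_def Xinv_def monic_least_term_single)

lemma lookup_least_exp:
  "Poly_Mapping.lookup (least_exp a b) j =
     (if j \<in> {2..n} then int (a j) - int (b j) else 0) +
     (\<Sum>i\<in>{2..n}. int (b i) * Poly_Mapping.lookup (M i) j)"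
proof -
  have "Poly_Mapping.lookup (least_exp a b) j =
      (\<Sum>i\<in>{2..n}. (if i = j then int (a i) - int (b i) else 0) + int (b i) * Poly_Mapping.lookup (M i) j)"
    unfolding least_exp_def lookup_sum lookup_add
    by (rule sum.cong) (simp_all add: lookup_single when_def ring_distribs)
  then show ?thesis
    by (simp add: sum.distrib)
qed

text \<open>Since \<open>M\<^sub>i\<close> involves only the variables after \<open>x\<^sub>i\<close>, the \<open>x\<^sub>j\<close>-exponent of
  \<open>least_exp a b\<close> determines \<open>a\<^sub>j - b\<^sub>j\<close> once all \<open>b\<^sub>i\<close> with \<open>i < j\<close> are known, and
  standardness recovers \<open>a\<^sub>j\<close> and \<open>b\<^sub>j\<close> from their difference.\<close>

lemma least_exp_inj:
  assumes std: "\<forall>i\<in>{2..n}. a i = 0 \<or> b i = 0" "\<forall>i\<in>{2..n}. a' i = 0 \<or> b' i = 0"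
    and eq: "least_exp a b = least_exp a' b'" and j: "j \<in> {2..n}"
  shows "a j = a' j \<and> b j = b' j"
  using j
proof (induction j rule: less_induct)
  case (less j)
  have "int (b i) * Poly_Mapping.lookup (M i) j = int (b' i) * Poly_Mapping.lookup (M i) j"
    if i: "i \<in> {2..n}" for i
  proof (cases "j \<in> Poly_Mapping.keys (M i)")
    case True
    then have "i < j"
      using keys_Min_F[OF i] by (auto simp: M_def)
    then show ?thesis
      using less.IH i by simp
  qed (simp add: in_keys_iff)
  then have "(\<Sum>i\<in>{2..n}. int (b i) * Poly_Mapping.lookup (M i) j) =
      (\<Sum>i\<in>{2..n}. int (b' i) * Poly_Mapping.lookup (M i) j)"
    by (rule sum.cong[OF refl])
  then have "int (a j) - int (b j) = int (a' j) - int (b' j)"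
    using arg_cong[OF eq, of "\<lambda>e. Poly_Mapping.lookup e j"] less.prems
    by (simp add: lookup_least_exp)
  then show ?case
    using std less.prems by force
qed

lemma alg_st_phi_eq_0:
  assumes s: "s \<in> alg_st n F" and phi_s: "phi s = 0"
  shows "s = 0"
proof -
  define std where "std p \<longleftrightarrow> (\<forall>i\<in>{2..n}. fst p i = 0 \<or> snd p i = 0)" for p :: "(nat \<Rightarrow> nat) \<times> (nat \<Rightarrow> nat)"
  obtain T c where T: "finite T" "T \<subseteq> {xmono n F a b | a b. \<forall>i\<in>{2..n}. a i = 0 \<or> b i = 0}"
      and s_eq: "s = (\<Sum>t\<in>T. lconst (c t) * t)"
    using rspan_finite_sum[OF s[unfolded alg_st_def]] by blast
  have ex: "\<forall>t\<in>T. \<exists>p. t = xmono n F (fst p) (snd p) \<and> std p"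
  proof
    fix t assume "t \<in> T"
    then obtain a b where "t = xmono n F a b" "\<forall>i\<in>{2..n}. a i = 0 \<or> b i = 0"
      using T(2) by blast
    then show "\<exists>p. t = xmono n F (fst p) (snd p) \<and> std p"
      by (intro exI[of _ "(a, b)"]) (simp add: std_def)
  qed
  obtain ab where ab: "\<And>t. t \<in> T \<Longrightarrow> t = xmono n F (fst (ab t)) (snd (ab t)) \<and> std (ab t)"
    using bchoice[OF ex] by blast
  define E where "E t = least_exp (fst (ab t)) (snd (ab t))" for t
  have "inj_on E T"
  proof (rule inj_onI)
    fix t t' assume t: "t \<in> T" and t': "t' \<in> T" and eq: "E t = E t'"
    have "fst (ab t) i = fst (ab t') i \<and> snd (ab t) i = snd (ab t') i" if "i \<in> {2..n}" for i
      using least_exp_inj[OF _ _ eq[unfolded E_def] that] ab[OF t] ab[OF t'] by (simp add: std_def)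
    then have "xmono n F (fst (ab t)) (snd (ab t)) = xmono n F (fst (ab t')) (snd (ab t'))"
      by (rule xmono_cong)
    then show "t = t'"
      using ab[OF t] ab[OF t'] by simp
  qed
  moreover have "monic_least_term (phi t) (E t)" if "t \<in> T" for t
    using ab[OF that] monic_least_term_phi_xmono[of "fst (ab t)" "snd (ab t)"] unfolding E_def by simp
  moreover have "(\<Sum>t\<in>T. lconst (c t) * phi t) = 0"
    using phi_s by (simp add: s_eq phi_sum phi_lconst)
  ultimately have "\<forall>t\<in>T. c t = 0"
    using monic_least_terms_independent[OF T(1)] by blast
  then show "s = 0"
    by (simp add: s_eq)
qed

lemma xmono_Suc_Suc:
  assumes i: "i \<in> {2..n}"
  shows "xmono n F (a(i := Suc k)) (b(i := Suc l)) = F i * xmono n F (a(i := k)) (b(i := l))"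
proof -
  define rest where "rest = (\<Prod>j\<in>{2..n} - {i}. Xv j ^ a j * xprime n F j ^ b j)"
  have "Xv i * xprime n F i = F i"
    by (simp add: xprime_eq[OF i] mult.left_commute[of "Xv i"] Xv_Xinv)
  moreover have "xmono n F (a(i := Suc k)) (b(i := Suc l)) = Xv i ^ Suc k * xprime n F i ^ Suc l * rest"
    using xmono_remove[OF i, of F "a(i := Suc k)" "b(i := Suc l)"] by (simp add: rest_def)
  moreover have "xmono n F (a(i := k)) (b(i := l)) = Xv i ^ k * xprime n F i ^ l * rest"
    using xmono_remove[OF i, of F "a(i := k)" "b(i := l)"] by (simp add: rest_def)
  moreover have "Xv i ^ Suc k * xprime n F i ^ Suc l * rest =
      (Xv i * xprime n F i) * (Xv i ^ k * xprime n F i ^ l * rest)"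
    by (simp add: mult_ac)
  ultimately show ?thesis
    by simp
qed

text \<open>Removing one factor \<open>x\<^sub>i x'\<^sub>i = F\<^sub>i\<close> and replacing it by \<open>phi F\<^sub>i\<close>, a polynomial in
  \<open>x\<^sub>2, \<dots>, x\<^sub>n\<close>, lowers the total degree in the \<open>x'\<^sub>i\<close> without changing the image under \<open>phi\<close>.\<close>

lemma phi_xmono_in_rspan:
  "phi (xmono n F a b) \<in> rspan (phi ` {xmono n F a b | a b. \<forall>i\<in>{2..n}. a i = 0 \<or> b i = 0})"
proof (induction "\<Sum>i\<in>{2..n}. b i" arbitrary: a b rule: less_induct)
  case less
  show ?case
  proof (cases "\<forall>i\<in>{2..n}. a i = 0 \<or> b i = 0")
    case True
    then show ?thesis by (blast intro: rspan_base)
  next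
    case False
    then obtain i where i: "i \<in> {2..n}" "a i > 0" "b i > 0" by auto
    define a' where "a' = a(i := a i - 1)"
    define b' where "b' = b(i := b i - 1)"
    have "xmono n F a b = F i * xmono n F a' b'"
      using xmono_Suc_Suc[OF i(1), of a "a i - 1" b "b i - 1"] i unfolding a'_def b'_def
      by (simp add: fun_upd_idem)
    then have "phi (xmono n F a b) = phi (G i * xmono n F a' b')"
      using i(1) deg1_nonneg_phi[of "F i"]
      by (simp add: G_def phi_mult phi_phi deg1_nonneg_F deg1_nonneg_xmono)
    also have "G i * xmono n F a' b' = (\<Sum>m\<in>Poly_Mapping.keys (G i).
        lconst (Poly_Mapping.lookup (G i) m) * xmono n F (\<lambda>j. a' j + nat (Poly_Mapping.lookup m j)) b')"
    proof -
      have "G i = (\<Sum>m\<in>Poly_Mapping.keys (G i). lconst (Poly_Mapping.lookup (G i) m) * Poly_Mapping.single m 1)"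
        using poly_mapping_sum_single[of "Poly_Mapping.keys (G i)" "G i"] by (simp add: lconst_mult_single)
      then have "G i * xmono n F a' b' =
          (\<Sum>m\<in>Poly_Mapping.keys (G i). lconst (Poly_Mapping.lookup (G i) m) * Poly_Mapping.single m 1) *
          xmono n F a' b'"
        by (rule arg_cong)
      also have "\<dots> = (\<Sum>m\<in>Poly_Mapping.keys (G i).
          lconst (Poly_Mapping.lookup (G i) m) * (Poly_Mapping.single m 1 * xmono n F a' b'))"
        by (simp add: sum_distrib_right mult.assoc)
      also have "\<dots> = (\<Sum>m\<in>Poly_Mapping.keys (G i).
          lconst (Poly_Mapping.lookup (G i) m) * xmono n F (\<lambda>j. a' j + nat (Poly_Mapping.lookup m j)) b')"
        using i(1) by (intro sum.cong refl) (simp add: single_mult_xmono keys_G)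
      finally show ?thesis .
    qed
    also have "phi \<dots> \<in> rspan (phi ` {xmono n F a b | a b. \<forall>i\<in>{2..n}. a i = 0 \<or> b i = 0})"
    proof -
      have "(\<Sum>j\<in>{2..n}. b' j) < (\<Sum>j\<in>{2..n}. b j)"
        using i by (simp add: b'_def sum.remove[of "{2..n}" i])
      then show ?thesis
        unfolding phi_sum phi_lconst by (intro rspan_sum rspan_smult less.hyps) simp_all
    qed
    finally show ?thesis .
  qed
qed

lemma alg_st_subset_alg_A: "alg_st n F \<subseteq> alg_A n F"
  unfolding alg_st_def alg_A_def by (rule rspan_subset_rspan) (blast intro: rspan_base)

lemma phi_alg_A_subset: "phi ` alg_A n F \<subseteq> phi ` alg_st n F"
proof -
  have "phi ` alg_A n F = rspan (phi ` {xmono n F a b | a b. True})"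
    unfolding alg_A_def by (rule rspan_image[OF phi_add phi_lconst])
  also have "\<dots> \<subseteq> rspan (phi ` {xmono n F a b | a b. \<forall>i\<in>{2..n}. a i = 0 \<or> b i = 0})"
    by (rule rspan_subset_rspan) (blast intro: phi_xmono_in_rspan)
  also have "\<dots> = phi ` alg_st n F"
    unfolding alg_st_def by (rule rspan_image[OF phi_add phi_lconst, symmetric])
  finally show ?thesis .
qed

lemma kernel_plus_alg_st:
  "{k + s | k s. k \<in> {p \<in> alg_A n F. phi p = 0} \<and> s \<in> alg_st n F} = alg_A n F"
proof
  show "{k + s | k s. k \<in> {p \<in> alg_A n F. phi p = 0} \<and> s \<in> alg_st n F} \<subseteq> alg_A n F"
  proof
    fix x assume "x \<in> {k + s | k s. k \<in> {p \<in> alg_A n F. phi p = 0} \<and> s \<in> alg_st n F}"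
    then obtain k s where "x = k + s" "k \<in> alg_A n F" "s \<in> alg_A n F"
      using alg_st_subset_alg_A by blast
    then show "x \<in> alg_A n F"
      unfolding alg_A_def by (simp add: rspan_add)
  qed
  show "alg_A n F \<subseteq> {k + s | k s. k \<in> {p \<in> alg_A n F. phi p = 0} \<and> s \<in> alg_st n F}"
  proof
    fix p assume p: "p \<in> alg_A n F"
    then obtain s where s: "s \<in> alg_st n F" "phi p = phi s"
      using phi_alg_A_subset by blast
    have "p - s \<in> alg_A n F"
      using p alg_st_subset_alg_A s(1) unfolding alg_A_def by (blast intro: rspan_diff)
    moreover have "phi (p - s) = 0"
      using s(2) by (simp add: phi_diff)
    ultimately show "p \<in> {k + s | k s. k \<in> {p \<in> alg_A n F. phi p = 0} \<and> s \<in> alg_st n F}"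
      using s(1) by (intro CollectI exI[of _ "p - s"] exI[of _ s]) simp
  qed
qed

lemma kernel_inter_alg_st: "{p \<in> alg_A n F. phi p = 0} \<inter> alg_st n F = {0}"
proof
  show "{p \<in> alg_A n F. phi p = 0} \<inter> alg_st n F \<subseteq> {0}"
    using alg_st_phi_eq_0 by blast
  have "0 \<in> alg_st n F"
    unfolding alg_st_def by (rule rspan.zero)
  then show "{0} \<subseteq> {p \<in> alg_A n F. phi p = 0} \<inter> alg_st n F"
    using alg_st_subset_alg_A by auto
qed

lemma inj_on_phi_alg_st: "inj_on phi (alg_st n F)"
proof (rule inj_onI)
  fix x y assume x: "x \<in> alg_st n F" and y: "y \<in> alg_st n F" and eq: "phi x = phi y"
  have "x - y \<in> alg_st n F"
    using x y unfolding alg_st_def by (rule rspan_diff)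
  moreover have "phi (x - y) = 0"
    using eq by (simp add: phi_diff)
  ultimately have "x - y = 0"
    by (rule alg_st_phi_eq_0)
  then show "x = y" by simp
qed

end

lemma standard_monomial_setting_if_condition_1_2:
  assumes seed: "LP_seed n F" and cond: "condition_1_2 n F"
  shows "standard_monomial_setting n F"
proof unfold_locales
  fix i assume i: "i \<in> {2..n}"
  then have i1: "i \<in> {1..n}" by simp
  show poly: "is_poly n (F i)"
    using seed i1 unfolding LP_seed_def irreducible_poly_def by blast
  have "F i \<noteq> 0"
    using seed i1 unfolding LP_seed_def irreducible_poly_def by blast
  moreover have "\<And>m. m \<in> Poly_Mapping.keys (F i) \<Longrightarrow> Poly_Mapping.keys m \<subseteq> {1..n}"
    using poly unfolding is_poly_def by (auto simp: in_keys_iff)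
  ultimately have lex: "lexfirst_exp n (F i) = Min (Poly_Mapping.keys (F i))"
    by (rule lexfirst_exp_eq_Min)
  have hat: "hatF n F i = F i"
    and lead: "i < n \<longrightarrow> Poly_Mapping.lookup (F i) (lexfirst_exp n (F i)) = 1 \<and>
        (\<forall>j. Poly_Mapping.lookup (lexfirst_exp n (F i)) j \<noteq> 0 \<longrightarrow> i < j \<and> j \<le> n \<and>
          Poly_Mapping.lookup (lexfirst_exp n (F i)) j > 0)"
    and last: "i = n \<longrightarrow> lexfirst n (F i) = 1"
    using cond i1 unfolding condition_1_2_def by blast+
  show "xprime n F i = F i * Xinv i"
    by (simp add: xprime_def hat)
  have "Poly_Mapping.lookup (F i) (lexfirst_exp n (F i)) = 1 \<and>
      Poly_Mapping.keys (lexfirst_exp n (F i)) \<subseteq> {i<..n}"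
  proof (cases "i < n")
    case True
    then show ?thesis using lead by (auto simp: in_keys_iff)
  next
    case False
    then have "Poly_Mapping.single (lexfirst_exp n (F i)) (Poly_Mapping.lookup (F i) (lexfirst_exp n (F i))) =
        Poly_Mapping.single 0 1"
      using last i by (simp add: lexfirst_def lmonom_def)
    then have "(Poly_Mapping.lookup (F i) (lexfirst_exp n (F i)) when lexfirst_exp n (F i) = 0) = 1"
      by (metis lookup_single_eq lookup_single)
    then show ?thesis
      by (simp add: when_def split: if_splits)
  qed
  then show "Poly_Mapping.lookup (F i) (Min (Poly_Mapping.keys (F i))) = 1"
    and "Poly_Mapping.keys (Min (Poly_Mapping.keys (F i))) \<subseteq> {i<..n}"
    by (simp_all add: lex)
qed

theorem lemma4p17:
  fixes n :: nat and F :: "nat \<Rightarrow> ('a::{factorial_ring_gcd, ring_char_0}) lpoly"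
  assumes "n \<ge> 2"
    and "LP_seed n F"
    and "condition_1_2 n F"
  shows "{k + s | k s. k \<in> {p \<in> alg_A n F. phi p = 0} \<and> s \<in> alg_st n F} = alg_A n F
         \<and> {p \<in> alg_A n F. phi p = 0} \<inter> alg_st n F = {0}
         \<and> inj_on phi (alg_st n F)"
proof -
  interpret standard_monomial_setting n F
    using assms(2,3) by (rule standard_monomial_setting_if_condition_1_2)
  show ?thesis
    using kernel_plus_alg_st kernel_inter_alg_st inj_on_phi_alg_st by blast
qed

end
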